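(* Let $M$ be a real symmetric $n\times n$ matrix with exactly one positive eigenvalue and $n-1$ negative eigenvalues (and no zero eigenvalue), and write $\det(xI-M)=\sum_{k=0}^n a_kx^k$. (1) If $\mathrm{Trace}(M)=0$, then the sequence $|a_0|,|a_1|,\ldots,|a_{n-2}|$ is log-concave and unimodal. (2) If $\mathrm{Trace}(M)>0$, then the sequence $|a_0|,|a_1|,\ldots,|a_{n-1}|$ is log-concave and unimodal.
   Context: A sequence $a_0,\dots,a_m$ is unimodal if there is an index $k$ with $a_{j-1}\le a_j$ for $j\le k$ and $a_j\ge a_{j+1}$ for $j\ge k$; it is log-concave if $a_i^2\ge a_{i-1}a_{i+1}$ for $1\le i\le m-1$. *)

theory Defs
  imports "Jordan_Normal_Form.Char_Poly"
begin

definition mat_trace :: "'a :: comm_ring_1 mat \<Rightarrow> 'a" where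
  "mat_trace A = (\<Sum>i<dim_row A. A $$ (i, i))"

definition unimodal_seq :: "(nat \<Rightarrow> real) \<Rightarrow> nat \<Rightarrow> bool" where
  "unimodal_seq a m \<longleftrightarrow>
     (\<exists>k\<le>m. (\<forall>j. 1 \<le> j \<and> j \<le> k \<longrightarrow> a (j - 1) \<le> a j) \<and>
            (\<forall>j. k \<le> j \<and> j + 1 \<le> m \<longrightarrow> a j \<ge> a (j + 1)))"

definition log_concave_seq :: "(nat \<Rightarrow> real) \<Rightarrow> nat \<Rightarrow> bool" where
  "log_concave_seq a m \<longleftrightarrow>
     (\<forall>i. 1 \<le> i \<and> i + 1 \<le> m \<longrightarrow> a i ^ 2 \<ge> a (i - 1) * a (i + 1))"

definition num_eigenvalues :: "real mat \<Rightarrow> (real \<Rightarrow> bool) \<Rightarrow> nat" where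
  "num_eigenvalues A P = (\<Sum>k\<in>{k. eigenvalue A k \<and> P k}. order k (char_poly A))"

end

theory Submission
  imports Defs
begin

text \<open>
  The eigenvalue counts say that P = char_poly M has n real roots: a simple positive root \<rho>
  and n - 1 negative ones. Hence P = (x - \<rho>) Q,
  where Q has only negative roots and therefore positive coefficients c_0, ..., c_(n-1) = 1.
  Real-rootedness is inherited by derivatives (Rolle), and the elementary inequality
  2 r_0 r_2 \<le> r_1^2 for a real-rooted r, applied to the k-th derivative, gives Newton's
  inequalities (k + 2) a_k a_(k+2) \<le> (k + 1) a_(k+1)^2 for the coefficients of any
  real-rooted polynomial. So the c_k are strictly log-concave and the ratios c_k / c_(k+1)
  increase with k; the last one is c_(n-2) = a_(n-1) + \<rho> = \<rho> - Trace M \<le> \<rho>. Therefore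
  a_(k+1) = c_k - \<rho> c_(k+1) < 0 for k < n - 2, and a_0 = -\<rho> c_0 < 0. The coefficients in
  question thus share a sign, Newton's inequalities make their absolute values log-concave,
  and a positive log-concave sequence is unimodal.
\<close>

section \<open>Products of linear factors\<close>

declare mult_pCons_left [simp del] \<comment> \<open>keeps products of linear factors unexpanded\<close>

lemma coeff_linear_factor_mult [simp]:
  fixes a :: "'a :: comm_ring_1"
  shows "coeff ([:a, 1:] * q) 0 = a * coeff q 0"
    and "coeff ([:a, 1:] * q) (Suc k) = a * coeff q (Suc k) + coeff q k"
  by (simp_all add: mult_pCons_left)

lemma prod_linear_factors_nonzero: "(\<Prod>x\<in>#A. [:-x, 1:]) \<noteq> (0 :: 'a :: idom poly)"
  by (induction A) auto

lemma proots_prod_linear_factors: "proots (\<Prod>x\<in>#A. [:-x, 1:]) = (A :: 'a :: idom multiset)"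
proof (induction A)
  case (add x A)
  have "proots ([:-x, 1:] * (\<Prod>x\<in>#A. [:-x, 1:])) = proots [:-x, 1:] + A"
    using add prod_linear_factors_nonzero[of A] by (subst proots_mult) simp_all
  then show ?case by simp
qed simp

lemma degree_prod_linear_factors: "degree (\<Prod>x\<in>#A. [:-x, 1:]) = size (A :: 'a :: idom multiset)"
proof (induction A)
  case (add x A)
  have "degree ([:-x, 1:] * (\<Prod>x\<in>#A. [:-x, 1:])) = degree [:-x, 1:] + size A"
    using add prod_linear_factors_nonzero[of A] by (subst degree_mult_eq) simp_all
  then show ?case by simp
qed simp

lemma lead_coeff_prod_linear_factors: "lead_coeff (\<Prod>x\<in>#A. [:-x, 1:]) = (1 :: 'a :: idom)"
  by (induction A) (simp_all add: lead_coeff_mult)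

lemma coeff_prod_linear_factors_pos:
  fixes A :: "real multiset"
  assumes "\<And>x. x \<in># A \<Longrightarrow> x < 0" "k \<le> size A"
  shows "0 < coeff (\<Prod>x\<in>#A. [:-x, 1:]) k"
  using assms
proof (induction A arbitrary: k)
  case (add r A)
  let ?q = "\<Prod>x\<in>#A. [:-x, 1:]"
  have "r < 0" using add.prems by simp
  have pos: "0 < coeff ?q j" if "j \<le> size A" for j using add that by simp
  have nonneg: "0 \<le> coeff ?q j" for j
    using pos[of j] coeff_eq_0[of ?q j]
    by (cases "j \<le> size A") (simp_all add: degree_prod_linear_factors)
  show ?case
  proof (cases k)
    case 0
    then show ?thesis using pos[of 0] \<open>r < 0\<close> by (simp add: mult_neg_pos)
  next
    case (Suc j)
    then have "0 < coeff ?q j" using pos add.prems by simp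
    moreover have "0 \<le> - r * coeff ?q (Suc j)"
      using nonneg[of "Suc j"] \<open>r < 0\<close> by (simp add: mult_nonpos_nonneg)
    ultimately show ?thesis using Suc by simp
  qed
qed simp

lemma coeff_prod_linear_factors_quadratic:
  fixes A :: "real multiset"
  defines "q \<equiv> \<Prod>x\<in>#A. [:-x, 1:]"
  shows "2 * coeff q 0 * coeff q 2 \<le> coeff q 1 ^ 2"
  unfolding q_def
proof (induction A)
  case (add r A)
  define c where "c i = coeff (\<Prod>x\<in>#A. [:-x, 1:]) i" for i
  have "2 * (- r * c 0) * (c 1 - r * c 2) \<le> (c 0 - r * c 1) ^ 2"
  proof -
    have "r\<^sup>2 * (2 * c 0 * c 2) \<le> r\<^sup>2 * (c 1)\<^sup>2"
      using add unfolding c_def by (intro mult_left_mono) auto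
    moreover have "(c 0 - r * c 1) ^ 2 - 2 * (- r * c 0) * (c 1 - r * c 2)
        = c 0 ^ 2 + (r\<^sup>2 * (c 1)\<^sup>2 - r\<^sup>2 * (2 * c 0 * c 2))"
      by (simp add: power2_eq_square algebra_simps)
    ultimately show ?thesis using zero_le_power2[of "c 0"] by linarith
  qed
  then show ?case by (simp add: c_def numeral_2_eq_2)
qed simp

section \<open>Real-rooted polynomials and Newton's inequalities\<close>

text \<open>The zero polynomial and the constants count as real-rooted.\<close>

definition real_rooted :: "real poly \<Rightarrow> bool" where
  "real_rooted p \<longleftrightarrow> size (proots p) = degree p"

lemma real_rooted_smult_prod_linear_factors:
  "real_rooted (Polynomial.smult c (\<Prod>x\<in>#A. [:-x, 1:]))"
  by (cases "c = 0")
    (simp_all add: real_rooted_def proots_prod_linear_factors degree_prod_linear_factors)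

lemma real_rooted_factorization:
  assumes "real_rooted p"
  shows "p = Polynomial.smult (lead_coeff p) (\<Prod>x\<in>#proots p. [:-x, 1:])"
  using assms
proof (induction "degree p" arbitrary: p)
  case 0
  then have "p = [:lead_coeff p:]" by (simp add: degree_0_id)
  then have "proots p = {#}" by (metis proots_const)
  with \<open>p = [:lead_coeff p:]\<close> show ?case by simp
next
  case (Suc d)
  then have "proots p \<noteq> {#}" by (auto simp: real_rooted_def)
  then obtain r where "r \<in># proots p" by blast
  then have p0: "p \<noteq> 0" by auto
  with \<open>r \<in># proots p\<close> have "poly p r = 0" by simp
  then have "[:-r, 1:] dvd p" by (simp add: dvd_iff_poly_eq_0)
  then obtain s where p: "p = [:-r, 1:] * s" by (elim dvdE)
  with p0 have s0: "s \<noteq> 0" by auto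
  have roots: "proots p = add_mset r (proots s)" and "degree p = Suc (degree s)"
    using p s0 by (simp_all add: proots_mult degree_mult_eq)
  have "lead_coeff p = lead_coeff s" using p by (simp add: lead_coeff_mult)
  from Suc \<open>degree p = Suc (degree s)\<close> roots
  have "s = Polynomial.smult (lead_coeff s) (\<Prod>x\<in>#proots s. [:-x, 1:])"
    by (simp add: real_rooted_def)
  then have "p = [:-r, 1:] * Polynomial.smult (lead_coeff s) (\<Prod>x\<in>#proots s. [:-x, 1:])"
    unfolding p by (rule arg_cong)
  also have "\<dots> = Polynomial.smult (lead_coeff p) (\<Prod>x\<in>#proots p. [:-x, 1:])"
    using \<open>lead_coeff p = lead_coeff s\<close> by (simp add: roots mult_smult_right)
  finally show ?case .
qed

lemma card_roots_le_Suc_card_pderiv_roots_below: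
  fixes p :: "real poly"
  assumes "pderiv p \<noteq> 0" "finite S" "S \<noteq> {}" "\<And>x. x \<in> S \<Longrightarrow> poly p x = 0"
  shows "card S \<le> Suc (card {z. poly (pderiv p) z = 0 \<and> z < Max S \<and> z \<notin> S})"
  using assms(2-4)
proof (induction S rule: finite_linorder_max_induct)
  case (insert b A)
  let ?T = "\<lambda>S. {z. poly (pderiv p) z = 0 \<and> z < Max S \<and> z \<notin> S}"
  show ?case
  proof (cases "A = {}")
    case False
    have "Max (insert b A) = b" using insert by (auto intro!: Max_eqI)
    have "Max A \<in> A" "Max A < b" using insert False by auto
    then obtain z where z: "Max A < z" "z < b" "poly (pderiv p) z = 0"
      using poly_MVT[of "Max A" b p] insert.prems by auto
    have "z \<notin> A" using z(1) Max_ge[OF insert.hyps(1)] by force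
    have fin: "finite (?T S)" for S
      using poly_roots_finite[OF assms(1)] by (rule finite_subset[rotated]) auto
    have "Suc (card (?T A)) = card (insert z (?T A))"
      using fin z by simp
    also have "\<dots> \<le> card (?T (insert b A))"
      by (rule card_mono[OF fin]) (use z insert \<open>z \<notin> A\<close> \<open>Max (insert b A) = b\<close> in auto)
    finally have "Suc (card (?T A)) \<le> card (?T (insert b A))" .
    moreover have "card A \<le> Suc (card (?T A))" using insert.IH False insert.prems by simp
    moreover have "card (insert b A) = Suc (card A)" using insert.hyps by auto
    ultimately show ?thesis by linarith
  qed simp
qed simp

lemma card_roots_le_Suc_card_pderiv_roots:
  fixes p :: "real poly"
  assumes "pderiv p \<noteq> 0" "finite S" "\<And>x. x \<in> S \<Longrightarrow> poly p x = 0"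
  shows "card S \<le> Suc (card ({z. poly (pderiv p) z = 0} - S))"
proof (cases "S = {}")
  case False
  have "finite ({z. poly (pderiv p) z = 0} - S)"
    using poly_roots_finite[OF assms(1)] by simp
  then have "card {z. poly (pderiv p) z = 0 \<and> z < Max S \<and> z \<notin> S}
      \<le> card ({z. poly (pderiv p) z = 0} - S)"
    by (rule card_mono) auto
  then show ?thesis
    using card_roots_le_Suc_card_pderiv_roots_below[OF assms(1,2) False assms(3)] by simp
qed simp

lemma card_set_mset_le_size: "card (set_mset M) \<le> size M"
  using size_mset_mono[OF mset_set_set_mset_msubset[of M]] by simp

lemma size_proots_le_Suc_size_proots_pderiv:
  fixes p :: "real poly"
  assumes "pderiv p \<noteq> 0"
  shows "size (proots p) \<le> Suc (size (proots (pderiv p)))"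
proof -
  have p0: "p \<noteq> 0" using assms by auto
  define S where "S = set_mset (proots p)"
  define D where "D = set_mset (proots (pderiv p))"
  define A B
    where "A = {#x \<in># proots (pderiv p). x \<in> S#}" "B = {#x \<in># proots (pderiv p). x \<notin> S#}"
  have "finite S" by (simp add: S_def)
  have "proots p = A + mset_set S"
  proof (rule multiset_eqI)
    fix x
    show "count (proots p) x = count (A + mset_set S) x"
      using p0 assms order_pderiv[OF p0, of x] \<open>finite S\<close>
      by (cases "x \<in> S") (auto simp: A_B_def S_def order_0I)
  qed
  then have "size (proots p) = size A + card S" by simp
  moreover have "card S \<le> Suc (card (D - S))"
    using card_roots_le_Suc_card_pderiv_roots[OF assms \<open>finite S\<close>] assms p0
    by (simp add: S_def D_def)
  moreover have "card (D - S) \<le> size B"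
  proof -
    have "D - S = set_mset B" by (auto simp: A_B_def D_def)
    then show ?thesis using card_set_mset_le_size by simp
  qed
  moreover have "size (proots (pderiv p)) = size A + size B"
    unfolding A_B_def by (simp only: size_union[symmetric] multiset_partition[symmetric])
  ultimately show ?thesis by linarith
qed

lemma real_rooted_pderiv:
  assumes "real_rooted p"
  shows "real_rooted (pderiv p)"
proof (cases "pderiv p = 0")
  case False
  then have "degree p \<le> Suc (size (proots (pderiv p)))"
    using size_proots_le_Suc_size_proots_pderiv[OF False] assms by (simp add: real_rooted_def)
  then show ?thesis
    using size_proots_le[of "pderiv p"] by (simp add: real_rooted_def degree_pderiv)
qed (simp add: real_rooted_def)

lemma real_rooted_higher_pderiv: "real_rooted p \<Longrightarrow> real_rooted ((pderiv ^^ k) p)"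
  by (induction k) (simp_all add: real_rooted_pderiv)

lemma real_rooted_coeff_quadratic:
  assumes "real_rooted p"
  shows "2 * coeff p 0 * coeff p 2 \<le> coeff p 1 ^ 2"
proof -
  let ?q = "\<Prod>x\<in>#proots p. [:-x, 1:]"
  have "lead_coeff p ^ 2 * (2 * coeff ?q 0 * coeff ?q 2) \<le> lead_coeff p ^ 2 * coeff ?q 1 ^ 2"
    by (intro mult_left_mono coeff_prod_linear_factors_quadratic) simp
  then show ?thesis
    by (subst (1 2 3) real_rooted_factorization[OF assms]) (simp add: power2_eq_square algebra_simps)
qed

lemma real_rooted_newton_inequality:
  assumes "real_rooted p"
  shows "real (k + 2) * coeff p k * coeff p (k + 2) \<le> real (k + 1) * coeff p (k + 1) ^ 2"
proof -
  \<comment> \<open>the k-th derivative starts with k! a_k + (k+1)! a_(k+1) x + (k+2)!/2 a_(k+2) x^2\<close>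
  define A B C :: real where "A = pochhammer 1 k" "B = pochhammer 2 k" "C = pochhammer 3 k"
  have B: "B = real (k + 1) * A" and C: "2 * C = real (k + 2) * B"
    using pochhammer_rec[of "1::real" k] pochhammer_rec'[of "1::real" k]
      pochhammer_rec[of "2::real" k] pochhammer_rec'[of "2::real" k]
    by (simp_all add: A_B_C_def)
  have "2 * coeff ((pderiv ^^ k) p) 0 * coeff ((pderiv ^^ k) p) 2 \<le> coeff ((pderiv ^^ k) p) 1 ^ 2"
    using real_rooted_coeff_quadratic[OF real_rooted_higher_pderiv[OF assms]] .
  then have "2 * (A * coeff p k) * (C * coeff p (k + 2)) \<le> (B * coeff p (k + 1)) ^ 2"
    unfolding A_B_C_def coeff_higher_pderiv by (simp add: numeral_2_eq_2)
  also have "2 * (A * coeff p k) * (C * coeff p (k + 2))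
      = A * coeff p k * coeff p (k + 2) * (2 * C)"
    by (simp add: mult_ac)
  also have "\<dots> = (A * B) * (real (k + 2) * coeff p k * coeff p (k + 2))"
    unfolding C by (simp add: mult_ac)
  also have "(B * coeff p (k + 1)) ^ 2 = (A * B) * (real (k + 1) * coeff p (k + 1) ^ 2)"
    by (simp add: B power2_eq_square mult_ac)
  finally have "(A * B) * (real (k + 2) * coeff p k * coeff p (k + 2))
      \<le> (A * B) * (real (k + 1) * coeff p (k + 1) ^ 2)" .
  moreover have "A * B > 0" using B by (simp add: A_B_C_def pochhammer_pos)
  ultimately show ?thesis by (simp add: mult_le_cancel_left_pos)
qed

lemma real_rooted_coeff_log_concave_strict:
  assumes "real_rooted p" "0 < coeff p k * coeff p (k + 2)"
  shows "coeff p k * coeff p (k + 2) < coeff p (k + 1) ^ 2"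
proof -
  have "real (k + 1) * (coeff p k * coeff p (k + 2)) < real (k + 2) * (coeff p k * coeff p (k + 2))"
    using assms(2) by (intro mult_strict_right_mono) auto
  also have "\<dots> \<le> real (k + 1) * coeff p (k + 1) ^ 2"
    using real_rooted_newton_inequality[OF assms(1)] by (simp add: mult.assoc)
  finally show ?thesis by (simp add: mult_less_cancel_left_pos)
qed

lemma real_rooted_coeff_log_concave:
  assumes "real_rooted p"
  shows "coeff p k * coeff p (k + 2) \<le> coeff p (k + 1) ^ 2"
proof (cases "0 < coeff p k * coeff p (k + 2)")
  case True
  then show ?thesis using real_rooted_coeff_log_concave_strict[OF assms] by (simp add: less_imp_le)
next
  case False
  then show ?thesis using zero_le_power2[of "coeff p (k + 1)"] by linarith
qed

section \<open>Sign and log-concavity of the coefficients\<close>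

lemma strictly_log_concave_ratio_less:
  fixes c :: "nat \<Rightarrow> real"
  assumes pos: "\<And>i. i \<le> m \<Longrightarrow> 0 < c i"
    and slc: "\<And>i. i + 2 \<le> m \<Longrightarrow> c i * c (i + 2) < c (i + 1) ^ 2"
    and "k < j" "j < m"
  shows "c k / c (k + 1) < c j / c (j + 1)"
proof -
  have step: "c i / c (i + 1) < c (Suc i) / c (Suc i + 1)" if "i \<in> {i. i + 2 \<le> m}" for i
  proof -
    have "0 < c (i + 1)" "0 < c (i + 2)" using pos that by auto
    then show ?thesis using slc that by (simp add: field_simps power2_eq_square)
  qed
  have "{k..<j} \<subseteq> {i. i + 2 \<le> m}" using \<open>j < m\<close> by auto
  from lift_Suc_mono_less_ivl[where f = "\<lambda>i. c i / c (i + 1)", OF step \<open>k < j\<close> this]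
  show ?thesis by simp
qed

lemma log_concave_seq_imp_unimodal_seq:
  assumes pos: "\<And>k. k \<le> m \<Longrightarrow> 0 < a k" and lc: "log_concave_seq a m"
  shows "unimodal_seq a m"
proof -
  have descent: "a (j + 1) \<le> a j" if "a j \<le> a (j - 1)" "1 \<le> j" "j + 1 \<le> m" for j
  proof -
    have "a (j - 1) * a (j + 1) \<le> a j * a j"
      using lc that unfolding log_concave_seq_def by (simp add: power2_eq_square)
    also have "\<dots> \<le> a (j - 1) * a j" using that pos[of j] by (simp add: mult_right_mono)
    finally show ?thesis using pos[of "j - 1"] that by (simp add: mult_le_cancel_left_pos)
  qed
  show ?thesis
  proof (cases "\<exists>j. j + 1 \<le> m \<and> a (j + 1) \<le> a j")
    case True
    define k where "k = (LEAST j. j + 1 \<le> m \<and> a (j + 1) \<le> a j)"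
    have k: "k + 1 \<le> m" "a (k + 1) \<le> a k"
      using LeastI_ex[OF True] by (simp_all add: k_def)
    have up: "a (j - 1) \<le> a j" if "1 \<le> j" "j \<le> k" for j
    proof -
      have "\<not> (j - 1 + 1 \<le> m \<and> a (j - 1 + 1) \<le> a (j - 1))"
        unfolding k_def by (rule not_less_Least) (use that in \<open>simp add: k_def\<close>)
      then show ?thesis using that k by simp
    qed
    have down: "a (j + 1) \<le> a j" if "k \<le> j" "j + 1 \<le> m" for j
      using that
    proof (induction j rule: dec_induct)
      case (step i)
      then show ?case using descent[of "Suc i"] by simp
    qed (use k in simp)
    have "k \<le> m" using k by simp
    then show ?thesis unfolding unimodal_seq_def using up down by blast
  next
    case False
    have "a (j - 1) \<le> a j" if "1 \<le> j" "j \<le> m" for j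
    proof -
      have "\<not> (j - 1 + 1 \<le> m \<and> a (j - 1 + 1) \<le> a (j - 1))" using False by blast
      then show ?thesis using that by simp
    qed
    then show ?thesis unfolding unimodal_seq_def by (intro exI[of _ m] conjI allI impI) simp_all
  qed
qed

lemma coeff_neg_one_positive_root:
  fixes \<rho> :: real and N :: "real multiset"
  defines "P \<equiv> [:-\<rho>, 1:] * (\<Prod>x\<in>#N. [:-x, 1:])"
  assumes "0 < \<rho>" "\<And>x. x \<in># N \<Longrightarrow> x < 0" "coeff P (size N) \<le> 0" "k \<le> size N - 1"
  shows "coeff P k < 0"
proof -
  define Q where "Q = (\<Prod>x\<in>#N. [:-x, 1:])"
  define m where "m = size N"
  have pos: "0 < coeff Q i" if "i \<le> m" for i
    using coeff_prod_linear_factors_pos assms(3) that by (simp add: Q_def m_def)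
  show ?thesis
  proof (cases k)
    case 0
    then show ?thesis using pos[of 0] \<open>0 < \<rho>\<close> by (simp add: P_def Q_def[symmetric] mult_pos_pos)
  next
    case (Suc j)
    then have "j < m - 1" using assms(5) by (simp add: m_def)
    have "coeff Q m = 1"
      using lead_coeff_prod_linear_factors[of N] by (simp add: Q_def m_def degree_prod_linear_factors)
    moreover have "coeff P m = - \<rho> * coeff Q m + coeff Q (m - 1)"
      using \<open>j < m - 1\<close> coeff_linear_factor_mult(2)[of "-\<rho>" Q "m - 1"] by (simp add: P_def Q_def)
    ultimately have "coeff Q (m - 1) / coeff Q m \<le> \<rho>" using assms(4) by (simp add: m_def)
    moreover have "coeff Q j / coeff Q (j + 1) < coeff Q (m - 1) / coeff Q (m - 1 + 1)"
    proof (rule strictly_log_concave_ratio_less[OF pos _ \<open>j < m - 1\<close>])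
      show "m - 1 < m" using \<open>j < m - 1\<close> by linarith
    next
      fix i assume "i + 2 \<le> m"
      then show "coeff Q i * coeff Q (i + 2) < coeff Q (i + 1) ^ 2"
        using pos real_rooted_coeff_log_concave_strict[of Q i]
          real_rooted_smult_prod_linear_factors[of 1 N] by (simp add: Q_def)
    qed
    moreover have "m - 1 + 1 = m" using \<open>j < m - 1\<close> by linarith
    ultimately have "coeff Q j / coeff Q (j + 1) < \<rho>" by simp
    then have "coeff Q j < \<rho> * coeff Q (Suc j)"
      using \<open>j < m - 1\<close> pos[of "Suc j"] by (simp add: divide_less_eq)
    then show ?thesis by (simp add: P_def Q_def[symmetric] Suc)
  qed
qed

lemma real_rooted_abs_coeff_log_concave_unimodal:
  assumes "real_rooted p" "\<And>k. k \<le> L \<Longrightarrow> coeff p k < 0"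
  shows "log_concave_seq (\<lambda>k. \<bar>coeff p k\<bar>) L \<and> unimodal_seq (\<lambda>k. \<bar>coeff p k\<bar>) L"
proof
  show lc: "log_concave_seq (\<lambda>k. \<bar>coeff p k\<bar>) L"
    unfolding log_concave_seq_def
  proof (intro allI impI)
    fix i assume i: "1 \<le> i \<and> i + 1 \<le> L"
    then have "coeff p (i - 1) < 0" "coeff p (i + 1) < 0" using assms(2) by auto
    then have "\<bar>coeff p (i - 1)\<bar> * \<bar>coeff p (i + 1)\<bar> = coeff p (i - 1) * coeff p (i - 1 + 2)"
      using i by simp
    also have "\<dots> \<le> coeff p (i - 1 + 1) ^ 2" by (rule real_rooted_coeff_log_concave[OF assms(1)])
    finally show "\<bar>coeff p (i - 1)\<bar> * \<bar>coeff p (i + 1)\<bar> \<le> \<bar>coeff p i\<bar> ^ 2" using i by simp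
  qed
  show "unimodal_seq (\<lambda>k. \<bar>coeff p k\<bar>) L"
    by (rule log_concave_seq_imp_unimodal_seq[OF _ lc]) (use assms(2) in \<open>simp add: less_imp_neq\<close>)
qed

section \<open>The characteristic polynomial\<close>

lemma coeff_prod_linear_factors_below_lead:
  fixes d :: "nat \<Rightarrow> 'a :: comm_ring_1"
  shows "coeff (\<Prod>i = 0..<Suc n. [:-d i, 1:]) n = - (\<Sum>i = 0..<Suc n. d i)"
proof (induction n)
  case (Suc n)
  have "coeff (\<Prod>i = 0..<Suc n. [:-d i, 1:]) (Suc n) = 1"
    using degree_prod_monic[of "Suc n" "\<lambda>i. [:-d i, 1:]"] by simp
  then show ?case
    using Suc
    by (simp add: prod.atLeast0_lessThan_Suc[of _ "Suc n"] mult.commute[of _ "[:-d (Suc n), 1:]"])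
qed simp

lemma char_poly_matrix_entry:
  assumes "M \<in> carrier_mat n n" "i < n" "j < n"
  shows "char_poly_matrix M $$ (i, j) = (if i = j then [:-M $$ (i, i), 1:] else [:-M $$ (i, j):])"
  using assms by (auto simp: char_poly_matrix_def)

lemma degree_char_poly_matrix_term_less:
  assumes M: "M \<in> carrier_mat n n" and \<sigma>: "\<sigma> permutes {0..<n}" "\<sigma> \<noteq> id"
  shows "degree (\<Prod>i = 0..<n. char_poly_matrix M $$ (i, \<sigma> i)) < n - 1"
proof -
  obtain i where "\<sigma> i \<noteq> i" using \<sigma>(2) by (auto simp: fun_eq_iff)
  then have i: "i < n" "\<sigma> i < n" "\<sigma> (\<sigma> i) \<noteq> \<sigma> i"
    using permutes_not_in[OF \<sigma>(1), of i] permutes_in_image[OF \<sigma>(1), of i]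
    by (auto simp: inj_eq[OF permutes_inj[OF \<sigma>(1)]])
  have "degree (\<Prod>i = 0..<n. char_poly_matrix M $$ (i, \<sigma> i))
      \<le> (\<Sum>j = 0..<n. degree (char_poly_matrix M $$ (j, \<sigma> j)))"
    using degree_prod_sum_le[of "{0..<n}"] by (simp add: o_def)
  also have "\<dots> \<le> (\<Sum>j = 0..<n. if \<sigma> j = j then 1 else 0)"
    by (intro sum_mono) (use M permutes_in_image[OF \<sigma>(1)] in \<open>simp add: char_poly_matrix_entry\<close>)
  also have "\<dots> = card ({0..<n} \<inter> {j. \<sigma> j = j})"
    by (simp add: sum.If_cases)
  also have "\<dots> \<le> card ({0..<n} - {i, \<sigma> i})"
    by (rule card_mono) (use i in auto)
  also have "\<dots> = n - 2"
    using i \<open>\<sigma> i \<noteq> i\<close> by (simp add: card_Diff_subset)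
  also have "\<dots> < n - 1"
    using i \<open>\<sigma> i \<noteq> i\<close> by linarith
  finally show ?thesis .
qed

lemma coeff_char_poly_trace:
  fixes M :: "'a :: comm_ring_1 mat"
  assumes M: "M \<in> carrier_mat n n" and "0 < n"
  shows "coeff (char_poly M) (n - 1) = - mat_trace M"
proof -
  let ?term = "\<lambda>\<sigma>. signof \<sigma> * (\<Prod>i = 0..<n. char_poly_matrix M $$ (i, \<sigma> i))"
  let ?S = "{\<sigma>. \<sigma> permutes {0..<n}}"
  have "coeff (char_poly M) (n - 1) = (\<Sum>\<sigma>\<in>?S. coeff (?term \<sigma>) (n - 1))"
    unfolding char_poly_def det_def'[OF char_poly_matrix_closed[OF M]] by (simp add: coeff_sum)
  also have "\<dots> = coeff (?term id) (n - 1)"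
  proof -
    have "coeff (?term \<sigma>) (n - 1) = 0" if "\<sigma> \<in> ?S - {id}" for \<sigma>
      using degree_char_poly_matrix_term_less[OF M, of \<sigma>] that by (simp add: coeff_eq_0)
    then show ?thesis
      using sum.remove[of ?S id "\<lambda>\<sigma>. coeff (?term \<sigma>) (n - 1)"]
      by (simp add: finite_permutations permutes_id)
  qed
  also have "?term id = (\<Prod>i = 0..<n. [:-M $$ (i, i), 1:])"
    by (simp add: char_poly_matrix_entry[OF M])
  also have "coeff \<dots> (n - 1) = - (\<Sum>i = 0..<n. M $$ (i, i))"
    using coeff_prod_linear_factors_below_lead[of "\<lambda>i. M $$ (i, i)" "n - 1"] \<open>0 < n\<close> by simp
  finally show ?thesis
    using M by (simp add: mat_trace_def atLeast0LessThan)
qed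

lemma num_eigenvalues_eq_size_proots:
  assumes M: "M \<in> carrier_mat n n"
  shows "num_eigenvalues M P = size {#x \<in># proots (char_poly M). P x#}"
proof -
  have "char_poly M \<noteq> 0" using degree_monic_char_poly[OF M] by auto
  then show ?thesis
    unfolding num_eigenvalues_def size_multiset_overloaded_eq eigenvalue_root_char_poly[OF M]
    by (intro sum.cong) auto
qed

lemma proots_char_poly_one_positive_eigenvalue:
  fixes M :: "real mat"
  assumes M: "M \<in> carrier_mat n n"
    and pos: "num_eigenvalues M (\<lambda>x. x > 0) = 1"
    and neg: "num_eigenvalues M (\<lambda>x. x < 0) = n - 1"
    and nonsingular: "\<not> eigenvalue M 0"
  obtains \<rho> N where "0 < \<rho>" "\<And>x. x \<in># N \<Longrightarrow> x < 0" "size N = n - 1"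
    "proots (char_poly M) = add_mset \<rho> N"
proof -
  define R where "R = proots (char_poly M)"
  define N where "N = {#x \<in># R. x < 0#}"
  have "size {#x \<in># R. 0 < x#} = 1"
    using pos num_eigenvalues_eq_size_proots[OF M] by (simp add: R_def)
  then obtain \<rho> where \<rho>: "{#x \<in># R. 0 < x#} = {#\<rho>#}"
    using size_1_singleton_mset by blast
  then have "\<rho> \<in># {#x \<in># R. 0 < x#}" by simp
  then have "0 < \<rho>" by simp
  have "char_poly M \<noteq> 0" using degree_monic_char_poly[OF M] by auto
  with nonsingular have "0 \<notin># R"
    by (simp add: R_def eigenvalue_root_char_poly[OF M])
  then have "{#x \<in># R. \<not> 0 < x#} = N"
    unfolding N_def by (intro filter_mset_cong) (auto simp: not_less le_less)
  have "R = {#x \<in># R. 0 < x#} + {#x \<in># R. \<not> 0 < x#}"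
    by (rule multiset_partition)
  also have "\<dots> = add_mset \<rho> N"
    using \<rho> \<open>{#x \<in># R. \<not> 0 < x#} = N\<close> by simp
  finally have "R = add_mset \<rho> N" .
  moreover have "size N = n - 1"
    using neg num_eigenvalues_eq_size_proots[OF M] by (simp add: N_def R_def)
  ultimately show ?thesis
    by (intro that[OF \<open>0 < \<rho>\<close>]) (simp_all add: N_def R_def[symmetric])
qed

lemma char_poly_one_positive_eigenvalue:
  fixes M :: "real mat"
  assumes M: "M \<in> carrier_mat n n"
    and "num_eigenvalues M (\<lambda>x. x > 0) = 1"
    and "num_eigenvalues M (\<lambda>x. x < 0) = n - 1"
    and "\<not> eigenvalue M 0"
  obtains \<rho> N where "0 < \<rho>" "\<And>x. x \<in># N \<Longrightarrow> x < 0" "size N = n - 1"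
    "char_poly M = [:-\<rho>, 1:] * (\<Prod>x\<in>#N. [:-x, 1:])"
proof -
  obtain \<rho> N where \<rho>N: "0 < \<rho>" "\<And>x. x \<in># N \<Longrightarrow> x < 0" "size N = n - 1"
    and R: "proots (char_poly M) = add_mset \<rho> N"
    using proots_char_poly_one_positive_eigenvalue[OF assms] by blast
  have monic: "degree (char_poly M) = n" "lead_coeff (char_poly M) = 1"
    using degree_monic_char_poly[OF M] by auto
  then have "real_rooted (char_poly M)"
    using size_proots_le[of "char_poly M"] R \<rho>N(3) by (simp add: real_rooted_def)
  then have "char_poly M
      = Polynomial.smult (lead_coeff (char_poly M)) (\<Prod>x\<in>#proots (char_poly M). [:-x, 1:])"
    by (rule real_rooted_factorization)
  also have "\<dots> = [:-\<rho>, 1:] * (\<Prod>x\<in>#N. [:-x, 1:])"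
    using monic(2) by (simp add: R)
  finally show ?thesis using that \<rho>N by blast
qed

theorem corollary2p3:
  fixes M :: "real mat" and n :: nat
  assumes "M \<in> carrier_mat n n"
    and "transpose_mat M = M"
    and "num_eigenvalues M (\<lambda>x. x > 0) = 1"
    and "num_eigenvalues M (\<lambda>x. x < 0) = n - 1"
    and "\<not> eigenvalue M 0"
  shows "(mat_trace M = 0 \<longrightarrow>
            log_concave_seq (\<lambda>k. \<bar>coeff (char_poly M) k\<bar>) (n - 2) \<and>
            unimodal_seq (\<lambda>k. \<bar>coeff (char_poly M) k\<bar>) (n - 2))
       \<and> (mat_trace M > 0 \<longrightarrow>
            log_concave_seq (\<lambda>k. \<bar>coeff (char_poly M) k\<bar>) (n - 1) \<and>
            unimodal_seq (\<lambda>k. \<bar>coeff (char_poly M) k\<bar>) (n - 1))"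
proof -
  obtain \<rho> N where \<rho>: "0 < \<rho>" and N: "\<And>x. x \<in># N \<Longrightarrow> x < 0"
    and P: "char_poly M = [:-\<rho>, 1:] * (\<Prod>x\<in>#N. [:-x, 1:])"
    using char_poly_one_positive_eigenvalue[OF assms(1,3-5)] by blast
  have n: "n = Suc (size N)"
    using degree_monic_char_poly[OF assms(1)] degree_prod_linear_factors[of "add_mset \<rho> N"] P
    by simp
  have rr: "real_rooted (char_poly M)"
    using real_rooted_smult_prod_linear_factors[of 1 "add_mset \<rho> N"] P by simp
  have trace: "coeff (char_poly M) (size N) = - mat_trace M"
    using coeff_char_poly_trace[OF assms(1)] n by simp
  have neg: "coeff (char_poly M) k < 0" if "0 \<le> mat_trace M" "k \<le> n - 2" for k
    using coeff_neg_one_positive_root[where k = k, OF \<rho> N] P trace that n by simp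
  show ?thesis
  proof (rule conjI; intro impI)
    assume "mat_trace M = 0"
    then show "log_concave_seq (\<lambda>k. \<bar>coeff (char_poly M) k\<bar>) (n - 2) \<and>
        unimodal_seq (\<lambda>k. \<bar>coeff (char_poly M) k\<bar>) (n - 2)"
      using real_rooted_abs_coeff_log_concave_unimodal[OF rr] neg by simp
  next
    assume "mat_trace M > 0"
    then have "coeff (char_poly M) k < 0" if "k \<le> n - 1" for k
      using neg[of k] trace n that by (cases "k = n - 1") auto
    from real_rooted_abs_coeff_log_concave_unimodal[OF rr this]
    show "log_concave_seq (\<lambda>k. \<bar>coeff (char_poly M) k\<bar>) (n - 1) \<and>
        unimodal_seq (\<lambda>k. \<bar>coeff (char_poly M) k\<bar>) (n - 1)" .
  qed
qed

end
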